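(* Suppose $\Psi(t)=1-t$, and let $c\colon\mathcal{X}\times\mathcal{Y}\to[0,1]$ be any cost function. Let $\mathcal{H}_{\mathrm{all}}$ be the family of all measurable functions $\mathcal{X}\times\overline{\mathcal{Y}}\to\mathbb{R}$. Then for all $h\in\mathcal{H}_{\mathrm{all}}$ and any distribution on $\mathcal{X}\times\mathcal{Y}$, $$\mathcal{E}_{\mathsf{L}_{\mathrm{def}}}(h)-\mathcal{E}^*_{\mathsf{L}_{\mathrm{def}}}(\mathcal{H}_{\mathrm{all}})\le(n+1)\big(\mathcal{E}_{\mathsf{L}_{\mathrm{RL2D}}}(h)-\mathcal{E}^*_{\mathsf{L}_{\mathrm{RL2D}}}(\mathcal{H}_{\mathrm{all}})\big).$$ Furthermore, $\mathsf{L}_{\mathrm{RL2D}}$ is Bayes-consistent with respect to $\mathsf{L}_{\mathrm{def}}$: for any distribution and any sequence $(h_k)$ in $\mathcal{H}_{\mathrm{all}}$, $\mathcal{E}_{\mathsf{L}_{\mathrm{RL2D}}}(h_k)-\mathcal{E}^*_{\mathsf{L}_{\mathrm{RL2D}}}(\mathcal{H}_{\mathrm{all}})\to0$ implies $\mathcal{E}_{\mathsf{L}_{\mathrm{def}}}(h_k)-\mathcal{E}^*_{\mathsf{L}_{\mathrm{def}}}(\mathcal{H}_{\mathrm{all}})\to0$.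
   Context: Learning to defer. $\mathcal{X}$ is an input space, $\mathcal{Y}=[n]$, $\overline{\mathcal{Y}}=\{1,\dots,n+1\}$ with $n+1$ meaning "defer". For $h\colon\mathcal{X}\times\overline{\mathcal{Y}}\to\mathbb{R}$, $\mathsf{h}(x)=\operatorname{argmax}_{y\in\overline{\mathcal{Y}}}h(x,y)$ with a fixed deterministic tie-breaking rule. Given a cost $c\colon\mathcal{X}\times\mathcal{Y}\to[0,1]$, the deferral loss is $\mathsf{L}_{\mathrm{def}}(h,x,y)=1_{\mathsf{h}(x)\neq y}1_{\mathsf{h}(x)\in[n]}+c(x,y)1_{\mathsf{h}(x)=n+1}$, and for non-increasing $\Psi$ the surrogate is $\mathsf{L}_{\mathrm{RL2D}}(h,x,y)=c(x,y)\Psi\big(\frac{e^{h(x,y)}}{\sum_{y'\in\overline{\mathcal{Y}}}e^{h(x,y')}}\big)+(1-c(x,y))\Psi\big(\frac{e^{h(x,y)}+e^{h(x,n+1)}}{\sum_{y'\in\overline{\mathcal{Y}}}e^{h(x,y')}}\big)$. $\mathcal{E}_{\mathsf{L}}(h)=\mathbb{E}_{(x,y)}[\mathsf{L}(h,x,y)]$ and $\mathcal{E}^*_{\mathsf{L}}(\mathcal{H})=\inf_{h\in\mathcal{H}}\mathcal{E}_{\mathsf{L}}(h)$. *)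

theory Defs
  imports "HOL-Probability.Probability"
begin

text \<open>Labels: \<open>Y = {1..n}\<close>, augmented labels \<open>Ybar = {1..n+1}\<close>, \<open>n+1\<close> = defer.
  Scoring functions \<open>h :: 'a \<Rightarrow> nat \<Rightarrow> real\<close> (only values on \<open>Ybar\<close> matter).\<close>

definition Ybar :: "nat \<Rightarrow> nat set" where
  "Ybar n = {1..n+1}"

definition hpred :: "nat \<Rightarrow> ('a \<Rightarrow> nat \<Rightarrow> real) \<Rightarrow> 'a \<Rightarrow> nat" where
  "hpred n h x = (LEAST y. y \<in> Ybar n \<and> (\<forall>y'\<in>Ybar n. h x y' \<le> h x y))"

definition L_def :: "nat \<Rightarrow> ('a \<Rightarrow> nat \<Rightarrow> real) \<Rightarrow> ('a \<Rightarrow> nat \<Rightarrow> real) \<Rightarrow> 'a \<Rightarrow> nat \<Rightarrow> real" where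
  "L_def n c h x y =
     (if hpred n h x \<noteq> y \<and> hpred n h x \<in> {1..n} then 1 else 0)
     + (if hpred n h x = n + 1 then c x y else 0)"

definition L_RL2D :: "(real \<Rightarrow> real) \<Rightarrow> nat \<Rightarrow> ('a \<Rightarrow> nat \<Rightarrow> real) \<Rightarrow> ('a \<Rightarrow> nat \<Rightarrow> real) \<Rightarrow> 'a \<Rightarrow> nat \<Rightarrow> real" where
  "L_RL2D \<Psi> n c h x y =
     c x y * \<Psi> (exp (h x y) / (\<Sum>y'\<in>Ybar n. exp (h x y')))
     + (1 - c x y) * \<Psi> ((exp (h x y) + exp (h x (n + 1))) / (\<Sum>y'\<in>Ybar n. exp (h x y')))"

text \<open>All measurable scoring functions \<open>X \<times> Ybar \<rightarrow> \<real>\<close> (Ybar carries the discrete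
  sigma-algebra, so measurability means measurability in \<open>x\<close> for each label).\<close>
definition H_all :: "'a measure \<Rightarrow> nat \<Rightarrow> ('a \<Rightarrow> nat \<Rightarrow> real) set" where
  "H_all M n = {h. \<forall>y\<in>Ybar n. (\<lambda>x. h x y) \<in> borel_measurable M}"

definition risk :: "('a \<times> nat) measure \<Rightarrow> ('a \<Rightarrow> nat \<Rightarrow> real) \<Rightarrow> real" where
  "risk D L = (\<integral>z. L (fst z) (snd z) \<partial>D)"

definition best_risk :: "('a \<times> nat) measure \<Rightarrow> ('a \<Rightarrow> nat \<Rightarrow> real) set
    \<Rightarrow> (('a \<Rightarrow> nat \<Rightarrow> real) \<Rightarrow> 'a \<Rightarrow> nat \<Rightarrow> real) \<Rightarrow> real" where
  "best_risk D H L = (INF h\<in>H. risk D (L h))"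

end

theory Submission
  imports Defs
begin

text \<open>Disintegrate \<open>D\<close> along its marginal in \<open>x\<close>: as there are finitely many labels, the
  conditional label probabilities \<open>p_y(x)\<close> are Radon--Nikodym derivatives. Put
  \<open>q_j(x) = p_j(x)\<close> for \<open>j \<le> n\<close> and \<open>q_(n+1)(x) = \<Sum>_y p_y(x) (1 - c(x,y))\<close>, and
  \<open>P(x) = \<Sum>_y p_y(x)\<close>. Predicting \<open>j\<close> has conditional deferral risk \<open>P(x) - q_j(x)\<close>, and for
  \<open>\<Psi>(t) = 1 - t\<close> the conditional surrogate risk of \<open>h\<close> is \<open>P(x) - \<Sum>_j q_j(x) s_j(x)\<close>, where
  \<open>s\<close> is the softmax of \<open>h(x,-)\<close>. Both are at least \<open>P(x) - max_j q_j(x)\<close>; the deferral loss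
  attains this at an argmax of \<open>q\<close>, and the surrogate approaches it as \<open>t \<rightarrow> \<infinity>\<close> with the scores
  \<open>t\<close> at that argmax and \<open>0\<close> elsewhere, whose softmax puts weight at most \<open>exp (-t)\<close> on every
  other label. The prediction of \<open>h\<close> is the mode of \<open>s\<close>, so it carries weight at least
  \<open>1/(n+1)\<close>, whence \<open>max q - q_(h(x)) \<le> (n+1) (max q - \<Sum>_j q_j s_j)\<close>. Integrating gives the
  excess risk bound, and consistency follows by squeezing.\<close>

lemma finite_Ybar [simp]: "finite (Ybar n)"
  by (simp add: Ybar_def)

lemma Ybar_eq_insert: "Ybar n = insert (n + 1) {1..n}"
  by (auto simp: Ybar_def)

lemma card_Ybar: "card (Ybar n) = n + 1"
  by (simp add: Ybar_def)

lemma hpred_in_Ybar: "hpred n h x \<in> Ybar n"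
  and hpred_maximal: "y \<in> Ybar n \<Longrightarrow> h x y \<le> h x (hpred n h x)"
proof -
  have "Max (h x ` Ybar n) \<in> h x ` Ybar n"
    by (intro Max_in) (auto simp: Ybar_def)
  then obtain k where "k \<in> Ybar n" "h x k = Max (h x ` Ybar n)"
    by auto
  then have "k \<in> Ybar n \<and> (\<forall>y\<in>Ybar n. h x y \<le> h x k)"
    by simp
  then have "hpred n h x \<in> Ybar n \<and> (\<forall>y\<in>Ybar n. h x y \<le> h x (hpred n h x))"
    unfolding hpred_def by (rule LeastI)
  then show "hpred n h x \<in> Ybar n" and "y \<in> Ybar n \<Longrightarrow> h x y \<le> h x (hpred n h x)"
    by auto
qed

lemma hpred_cong: "(\<And>y. y \<in> Ybar n \<Longrightarrow> h x y = h' x y) \<Longrightarrow> hpred n h x = hpred n h' x"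
  unfolding hpred_def by (metis (no_types, lifting))

definition softmax :: "nat \<Rightarrow> ('a \<Rightarrow> nat \<Rightarrow> real) \<Rightarrow> 'a \<Rightarrow> nat \<Rightarrow> real" where
  "softmax n h x j = exp (h x j) / (\<Sum>j'\<in>Ybar n. exp (h x j'))"

lemma sum_exp_pos: "0 < (\<Sum>j\<in>Ybar n. exp (h x j :: real))"
  by (rule sum_pos) (auto simp: Ybar_def)

lemma softmax_pos: "0 < softmax n h x j"
  using sum_exp_pos[where n=n and h=h and x=x] by (simp add: softmax_def)

lemma sum_softmax: "(\<Sum>j\<in>Ybar n. softmax n h x j) = 1"
  using sum_exp_pos[where n=n and h=h and x=x] by (simp add: softmax_def flip: sum_divide_distrib)

lemma softmax_mono: "h x j \<le> h x j' \<Longrightarrow> softmax n h x j \<le> softmax n h x j'"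
  using sum_exp_pos[where n=n and h=h and x=x] by (simp add: softmax_def divide_right_mono)

lemma softmax_le_exp_diff:
  assumes "k \<in> Ybar n"
  shows "softmax n h x j \<le> exp (h x j - h x k)"
proof -
  have "exp (h x k) \<le> (\<Sum>j'\<in>Ybar n. exp (h x j'))"
    using assms by (intro member_le_sum) auto
  then have "softmax n h x j \<le> exp (h x j) / exp (h x k)"
    using sum_exp_pos[where n=n and h=h and x=x] unfolding softmax_def
    by (intro divide_left_mono) auto
  then show ?thesis
    by (simp add: exp_diff)
qed

lemma softmax_label_plus_defer_le_one:
  assumes "y \<in> {1..n}"
  shows "softmax n h x y + softmax n h x (n + 1) \<le> 1"
proof -
  have "(\<Sum>j\<in>{y, n + 1}. softmax n h x j) \<le> (\<Sum>j\<in>Ybar n. softmax n h x j)"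
    using assms by (intro sum_mono2) (auto simp: Ybar_def less_imp_le[OF softmax_pos])
  then show ?thesis
    using assms by (simp add: sum_softmax)
qed

lemma L_RL2D_one_minus_eq:
  assumes "y \<in> {1..n}"
  shows "L_RL2D (\<lambda>t. 1 - t) n c h x y
    = 1 - softmax n h x y - (1 - c x y) * softmax n h x (n + 1)"
  using sum_exp_pos[where n=n and h=h and x=x] unfolding L_RL2D_def softmax_def
  by (simp add: field_simps)

lemma abs_L_RL2D_one_minus_le_one:
  assumes y: "y \<in> {1..n}" and c: "0 \<le> c x y" "c x y \<le> 1"
  shows "\<bar>L_RL2D (\<lambda>t. 1 - t) n c h x y\<bar> \<le> 1"
proof -
  have s: "0 < softmax n h x y" "0 < softmax n h x (n + 1)"
    by (rule softmax_pos)+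
  have "0 \<le> (1 - c x y) * softmax n h x (n + 1)"
    using c s by simp
  moreover have "(1 - c x y) * softmax n h x (n + 1) \<le> softmax n h x (n + 1)"
    using c s by (intro mult_left_le_one_le) auto
  moreover have "softmax n h x y + softmax n h x (n + 1) \<le> 1"
    using softmax_label_plus_defer_le_one[OF y] .
  ultimately show ?thesis
    using s unfolding L_RL2D_one_minus_eq[OF y] by (simp only: abs_le_iff) linarith
qed

lemma abs_L_def_le_one: "0 \<le> c x y \<Longrightarrow> c x y \<le> 1 \<Longrightarrow> \<bar>L_def n c h x y\<bar> \<le> 1"
  unfolding L_def_def by auto

lemma H_all_restrict:
  assumes "h \<in> H_all M n"
  obtains h' where "\<And>y. (\<lambda>x. h' x y) \<in> borel_measurable M"
    and "\<And>x y. y \<in> Ybar n \<Longrightarrow> h' x y = h x y"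
proof -
  define h' where "h' x y = (if y \<in> Ybar n then h x y else 0)" for x y
  have "(\<lambda>x. h' x y) \<in> borel_measurable M" for y
    using assms by (cases "y \<in> Ybar n") (auto simp: h'_def H_all_def)
  then show thesis
    by (rule that[of h']) (simp add: h'_def)
qed

lemma measurable_hpred:
  assumes "h \<in> H_all M n"
  shows "(\<lambda>x. hpred n h x) \<in> measurable M (count_space UNIV)"
proof -
  obtain h' where [measurable]: "\<And>y. (\<lambda>x. h' x y) \<in> borel_measurable M"
    and h': "\<And>x y. y \<in> Ybar n \<Longrightarrow> h' x y = h x y"
    using H_all_restrict[OF assms] by blast
  have "(\<lambda>x. hpred n h x) = (\<lambda>x. hpred n h' x)"
    using h' by (intro ext hpred_cong) simp
  then show ?thesis
    unfolding hpred_def by simp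
qed

lemma borel_measurable_softmax:
  assumes "h \<in> H_all M n" "j \<in> Ybar n"
  shows "(\<lambda>x. softmax n h x j) \<in> borel_measurable M"
proof -
  obtain h' where [measurable]: "\<And>y. (\<lambda>x. h' x y) \<in> borel_measurable M"
    and h': "\<And>x y. y \<in> Ybar n \<Longrightarrow> h' x y = h x y"
    using H_all_restrict[OF assms(1)] by blast
  have "(\<lambda>x. softmax n h x j) = (\<lambda>x. softmax n h' x j)"
    using h' assms(2) by (auto simp: softmax_def)
  then show ?thesis
    unfolding softmax_def by simp
qed

lemma max_minus_weighted_sum:
  fixes s q :: "'i \<Rightarrow> real"
  assumes "sum s I = 1"
  shows "m - (\<Sum>j\<in>I. q j * s j) = (\<Sum>j\<in>I. s j * (m - q j))"
  using assms by (simp add: sum_subtractf algebra_simps flip: sum_distrib_left sum_distrib_right)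

lemma gap_at_mode_le_card_mult_mean_gap:
  fixes s q :: "'i \<Rightarrow> real"
  assumes "finite I" "k \<in> I" "\<And>j. j \<in> I \<Longrightarrow> 0 \<le> s j" "sum s I = 1"
    and "\<And>j. j \<in> I \<Longrightarrow> s j \<le> s k" "\<And>j. j \<in> I \<Longrightarrow> q j \<le> m"
  shows "m - q k \<le> real (card I) * (m - (\<Sum>j\<in>I. q j * s j))"
proof -
  have "1 \<le> real (card I) * s k"
    using assms sum_bounded_above[of I s "s k"] by simp
  then have "m - q k \<le> real (card I) * (s k * (m - q k))"
    using mult_right_mono[of 1 "real (card I) * s k" "m - q k"] assms by (simp add: mult.assoc)
  also have "\<dots> \<le> real (card I) * (\<Sum>j\<in>I. s j * (m - q j))"
    using assms by (intro mult_left_mono member_le_sum) auto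
  finally show ?thesis
    using max_minus_weighted_sum[OF assms(4)] by simp
qed

lemma softmax_mean_le_max:
  assumes "\<And>j. j \<in> Ybar n \<Longrightarrow> q j \<le> m"
  shows "(\<Sum>j\<in>Ybar n. q j * softmax n h x j) \<le> m"
proof -
  have "0 \<le> (\<Sum>j\<in>Ybar n. softmax n h x j * (m - q j))"
    using assms softmax_pos[where n=n and h=h and x=x]
    by (intro sum_nonneg) (simp add: less_imp_le)
  then show ?thesis
    using max_minus_weighted_sum[where m=m and q=q, OF sum_softmax[where n=n and h=h and x=x]]
    by simp
qed

lemma gap_at_hpred_le:
  assumes "\<And>j. j \<in> Ybar n \<Longrightarrow> q j \<le> m"
  shows "m - q (hpred n h x) \<le> real (n + 1) * (m - (\<Sum>j\<in>Ybar n. q j * softmax n h x j))"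
proof -
  have "softmax n h x j \<le> softmax n h x (hpred n h x)" if "j \<in> Ybar n" for j
    using that by (intro softmax_mono hpred_maximal)
  then have "m - q (hpred n h x)
      \<le> real (card (Ybar n)) * (m - (\<Sum>j\<in>Ybar n. q j * softmax n h x j))"
    using assms hpred_in_Ybar sum_softmax
    by (intro gap_at_mode_le_card_mult_mean_gap) (auto intro: less_imp_le[OF softmax_pos])
  then show ?thesis
    by (simp add: card_Ybar)
qed

locale finite_label_distribution =
  fixes M :: "'a measure" and D :: "('a \<times> 'b) measure" and Y :: "'b set"
  assumes prob_space_D: "prob_space D"
    and sets_D: "sets D = sets (M \<Otimes>\<^sub>M count_space Y)"
    and finite_Y: "finite Y"
begin

definition marginal :: "'a measure" where
  "marginal = distr D M fst"

definition label_measure :: "'b \<Rightarrow> 'a measure" where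
  "label_measure y = distr (density D (\<lambda>z. ennreal (indicator (space M \<times> {y}) z))) M fst"

text \<open>\<open>label_measure y A = D (A \<times> {y})\<close>, so \<open>cond_prob y\<close> is a version of the conditional
  probability of the label \<open>y\<close> given \<open>x\<close>.\<close>
definition cond_prob :: "'b \<Rightarrow> 'a \<Rightarrow> real" where
  "cond_prob y x = enn2real (RN_deriv marginal (label_measure y) x)"

lemma space_D: "space D = space M \<times> Y"
  using sets_eq_imp_space_eq[OF sets_D] by (simp add: space_pair_measure)

lemma measurable_fst_D [measurable]: "fst \<in> measurable D M"
  by (subst measurable_cong_sets[OF sets_D refl]) simp

lemma slice_in_sets_D [measurable]: "y \<in> Y \<Longrightarrow> space M \<times> {y} \<in> sets D"
  unfolding sets_D by (intro pair_measureI) auto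

lemma sets_marginal [simp, measurable_cong]: "sets marginal = sets M"
  by (simp add: marginal_def)

lemma sets_label_measure [simp, measurable_cong]: "sets (label_measure y) = sets M"
  by (simp add: label_measure_def)

lemma sigma_finite_marginal: "sigma_finite_measure marginal"
  using prob_space.prob_space_distr[OF prob_space_D measurable_fst_D]
  by (simp add: marginal_def prob_space_def finite_measure_def)

lemma finite_measure_label_measure:
  assumes "y \<in> Y"
  shows "finite_measure (label_measure y)"
proof (rule finite_measureI)
  let ?Dy = "density D (\<lambda>z. ennreal (indicator (space M \<times> {y}) z))"
  have "emeasure (label_measure y) (space M) \<le> emeasure ?Dy (space ?Dy)"
    unfolding label_measure_def by (subst emeasure_distr) (auto intro!: emeasure_mono)
  also have "\<dots> = (\<integral>\<^sup>+z. ennreal (indicator (space M \<times> {y}) z) \<partial>D)"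
    using assms by (subst emeasure_density) (auto intro!: nn_integral_cong)
  also have "\<dots> \<le> (\<integral>\<^sup>+z. 1 \<partial>D)"
    by (intro nn_integral_mono) (auto split: split_indicator)
  also have "\<dots> = 1"
    using prob_space.emeasure_space_1[OF prob_space_D] by simp
  finally show "emeasure (label_measure y) (space (label_measure y)) \<noteq> \<infinity>"
    by (auto simp: label_measure_def top_unique)
qed

lemma absolutely_continuous_label_measure:
  assumes "y \<in> Y"
  shows "absolutely_continuous marginal (label_measure y)"
  unfolding absolutely_continuous_def
proof
  fix A assume A: "A \<in> null_sets marginal"
  then have "A \<in> sets M"
    by (simp add: null_sets_def)
  have "emeasure (label_measure y) A
      = (\<integral>\<^sup>+z. ennreal (indicator (space M \<times> {y}) z) * indicator (fst -` A \<inter> space D) z \<partial>D)"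
    unfolding label_measure_def using assms \<open>A \<in> sets M\<close>
    by (subst emeasure_distr, simp, simp) (subst emeasure_density, auto intro!: nn_integral_cong)
  also have "\<dots> \<le> (\<integral>\<^sup>+z. indicator (fst -` A \<inter> space D) z \<partial>D)"
    by (intro nn_integral_mono) (auto split: split_indicator)
  also have "\<dots> = emeasure marginal A"
    unfolding marginal_def using \<open>A \<in> sets M\<close> by (simp add: emeasure_distr)
  also have "\<dots> = 0"
    using A by (rule null_setsD1)
  finally show "A \<in> null_sets (label_measure y)"
    using \<open>A \<in> sets M\<close> by (simp add: null_sets_def)
qed

lemma
  fixes g :: "'a \<Rightarrow> real"
  assumes y: "y \<in> Y" and g [measurable]: "g \<in> borel_measurable M"
  shows integrable_slice_iff:
      "integrable D (\<lambda>z. indicator (space M \<times> {y}) z * g (fst z))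
        \<longleftrightarrow> integrable marginal (\<lambda>x. cond_prob y x * g x)"
    and integral_slice:
      "(\<integral>z. indicator (space M \<times> {y}) z * g (fst z) \<partial>D) = (\<integral>x. cond_prob y x * g x \<partial>marginal)"
proof -
  have sets_eq: "sets (label_measure y) = sets marginal" and g': "g \<in> borel_measurable marginal"
    by simp_all
  note RN = sigma_finite_measure.RN_deriv_integrable sigma_finite_measure.RN_deriv_integral
  note RN = RN[OF sigma_finite_marginal finite_measure.sigma_finite_measure[OF
        finite_measure_label_measure[OF y]] absolutely_continuous_label_measure[OF y] sets_eq g']
  have "integrable (label_measure y) g
      \<longleftrightarrow> integrable D (\<lambda>z. indicator (space M \<times> {y}) z * g (fst z))"
    unfolding label_measure_def using y by (simp add: integrable_distr_eq integrable_density)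
  then show "integrable D (\<lambda>z. indicator (space M \<times> {y}) z * g (fst z))
      \<longleftrightarrow> integrable marginal (\<lambda>x. cond_prob y x * g x)"
    using RN(1) by (simp add: cond_prob_def)
  have "integral\<^sup>L (label_measure y) g = (\<integral>z. indicator (space M \<times> {y}) z * g (fst z) \<partial>D)"
    unfolding label_measure_def using y by (simp add: integral_distr integral_density)
  then show "(\<integral>z. indicator (space M \<times> {y}) z * g (fst z) \<partial>D) = (\<integral>x. cond_prob y x * g x \<partial>marginal)"
    using RN(2) by (simp add: cond_prob_def)
qed

lemma
  fixes F :: "'a \<Rightarrow> 'b \<Rightarrow> real"
  assumes F_meas: "\<And>y. y \<in> Y \<Longrightarrow> (\<lambda>x. F x y) \<in> borel_measurable M"
    and F_bound: "\<And>x y. x \<in> space M \<Longrightarrow> y \<in> Y \<Longrightarrow> \<bar>F x y\<bar> \<le> B"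
  shows integrable_cond_expectation: "integrable marginal (\<lambda>x. \<Sum>y\<in>Y. cond_prob y x * F x y)"
    and integral_disintegrate:
      "(\<integral>z. F (fst z) (snd z) \<partial>D) = (\<integral>x. (\<Sum>y\<in>Y. cond_prob y x * F x y) \<partial>marginal)"
proof -
  interpret D: prob_space D
    by (rule prob_space_D)
  have slice_integrable: "integrable D (\<lambda>z. indicator (space M \<times> {y}) z * F (fst z) y)"
    if y: "y \<in> Y" for y
  proof (rule D.integrable_const_bound[where B = B])
    show "AE z in D. norm (indicator (space M \<times> {y}) z * F (fst z) y) \<le> B"
    proof (rule AE_I2)
      fix z assume "z \<in> space D"
      then have "\<bar>F (fst z) y\<bar> \<le> B"
        using F_bound y by (auto simp: space_D)
      then show "norm (indicator (space M \<times> {y}) z * F (fst z) y) \<le> B"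
        by (auto split: split_indicator)
    qed
    show "(\<lambda>z. indicator (space M \<times> {y}) z * F (fst z) y) \<in> borel_measurable D"
      using y measurable_compose[OF measurable_fst_D F_meas[OF y]] by simp
  qed
  then have integrable: "integrable marginal (\<lambda>x. cond_prob y x * F x y)" if "y \<in> Y" for y
    using that F_meas integrable_slice_iff by blast
  then show "integrable marginal (\<lambda>x. \<Sum>y\<in>Y. cond_prob y x * F x y)"
    by (intro Bochner_Integration.integrable_sum)
  have "(\<integral>z. F (fst z) (snd z) \<partial>D)
      = (\<integral>z. (\<Sum>y\<in>Y. indicator (space M \<times> {y}) z * F (fst z) y) \<partial>D)"
    using finite_Y by (intro Bochner_Integration.integral_cong)
      (auto simp: space_D indicator_def if_distrib sum.If_cases)
  also have "\<dots> = (\<Sum>y\<in>Y. (\<integral>z. indicator (space M \<times> {y}) z * F (fst z) y \<partial>D))"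
    using slice_integrable by (intro Bochner_Integration.integral_sum)
  also have "\<dots> = (\<Sum>y\<in>Y. (\<integral>x. cond_prob y x * F x y \<partial>marginal))"
    using F_meas integral_slice by (intro sum.cong) auto
  also have "\<dots> = (\<integral>x. (\<Sum>y\<in>Y. cond_prob y x * F x y) \<partial>marginal)"
    using integrable by (intro Bochner_Integration.integral_sum[symmetric])
  finally show "(\<integral>z. F (fst z) (snd z) \<partial>D)
      = (\<integral>x. (\<Sum>y\<in>Y. cond_prob y x * F x y) \<partial>marginal)" .
qed

lemma borel_measurable_cond_prob [measurable]: "cond_prob y \<in> borel_measurable M"
  using borel_measurable_RN_deriv[of marginal "label_measure y"]
    measurable_cong_sets[OF sets_marginal refl]
  unfolding cond_prob_def by simp

end

lemma best_risk_eqI: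
  assumes lower: "\<And>h. h \<in> H \<Longrightarrow> V \<le> risk D (L h)"
    and approx: "\<And>e. 0 < e \<Longrightarrow> \<exists>h\<in>H. risk D (L h) \<le> V + e"
  shows "best_risk D H L = V"
  unfolding best_risk_def
proof (rule antisym)
  have bdd: "bdd_below ((\<lambda>h. risk D (L h)) ` H)"
    using lower by (intro bdd_belowI2)
  show "(INF h\<in>H. risk D (L h)) \<le> V"
  proof (rule field_le_epsilon)
    fix e :: real assume "0 < e"
    then obtain h where "h \<in> H" "risk D (L h) \<le> V + e"
      using approx by blast
    then show "(INF h\<in>H. risk D (L h)) \<le> V + e"
      using cINF_lower[OF bdd] order_trans by blast
  qed
  have "H \<noteq> {}"
    using approx[of 1] by auto
  then show "V \<le> (INF h\<in>H. risk D (L h))"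
    using lower by (intro cINF_greatest)
qed

locale deferral_problem = finite_label_distribution M D "{1..n}"
  for M :: "'a measure" and D :: "('a \<times> nat) measure" and n :: nat +
  fixes c :: "'a \<Rightarrow> nat \<Rightarrow> real"
  assumes c_range: "\<And>x y. x \<in> space M \<Longrightarrow> y \<in> {1..n} \<Longrightarrow> 0 \<le> c x y \<and> c x y \<le> 1"
    and c_meas: "\<And>y. y \<in> {1..n} \<Longrightarrow> (\<lambda>x. c x y) \<in> borel_measurable M"
begin

text \<open>For \<open>j \<in> Ybar n\<close>, \<open>label_mass x - gain x j\<close> is the conditional deferral risk of choosing
  \<open>j\<close> at \<open>x\<close>.\<close>

definition gain :: "'a \<Rightarrow> nat \<Rightarrow> real" where
  "gain x j = (if j \<le> n then cond_prob j x else (\<Sum>y\<in>{1..n}. cond_prob y x * (1 - c x y)))"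

definition label_mass :: "'a \<Rightarrow> real" where
  "label_mass x = (\<Sum>y\<in>{1..n}. cond_prob y x)"

definition max_gain :: "'a \<Rightarrow> real" where
  "max_gain x = gain x (hpred n gain x)"

definition bayes_risk :: real where
  "bayes_risk = (\<integral>x. label_mass x - max_gain x \<partial>marginal)"

lemma gain_le_max_gain: "j \<in> Ybar n \<Longrightarrow> gain x j \<le> max_gain x"
  unfolding max_gain_def by (rule hpred_maximal)

lemma borel_measurable_gain [measurable]: "(\<lambda>x. gain x j) \<in> borel_measurable M"
  using c_meas by (cases "j \<le> n") (simp_all add: gain_def)

lemma gain_in_H_all: "gain \<in> H_all M n"
  by (simp add: H_all_def)

lemma cond_risk_L_def:
  "(\<Sum>y\<in>{1..n}. cond_prob y x * L_def n c h x y) = label_mass x - gain x (hpred n h x)"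
proof (cases "hpred n h x \<le> n")
  case True
  then have "hpred n h x \<in> {1..n}"
    using hpred_in_Ybar[of n h x] by (simp add: Ybar_def)
  then have "(\<Sum>y\<in>{1..n}. cond_prob y x * L_def n c h x y)
      = (\<Sum>y\<in>{1..n}. cond_prob y x - (if y = hpred n h x then cond_prob y x else 0))"
    by (intro sum.cong) (auto simp: L_def_def)
  then show ?thesis
    using True \<open>hpred n h x \<in> {1..n}\<close> by (simp add: sum_subtractf label_mass_def gain_def)
next
  case False
  then have "hpred n h x = n + 1"
    using hpred_in_Ybar[of n h x] by (simp add: Ybar_def)
  then have "(\<Sum>y\<in>{1..n}. cond_prob y x * L_def n c h x y)
      = (\<Sum>y\<in>{1..n}. cond_prob y x - cond_prob y x * (1 - c x y))"
    by (intro sum.cong) (auto simp: L_def_def algebra_simps)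
  then show ?thesis
    using \<open>hpred n h x = n + 1\<close> by (simp add: sum_subtractf label_mass_def gain_def)
qed

lemma cond_risk_L_RL2D:
  "(\<Sum>y\<in>{1..n}. cond_prob y x * L_RL2D (\<lambda>t. 1 - t) n c h x y)
    = label_mass x - (\<Sum>j\<in>Ybar n. gain x j * softmax n h x j)"
proof -
  have "(\<Sum>y\<in>{1..n}. cond_prob y x * L_RL2D (\<lambda>t. 1 - t) n c h x y)
      = (\<Sum>y\<in>{1..n}. cond_prob y x - cond_prob y x * softmax n h x y
           - cond_prob y x * (1 - c x y) * softmax n h x (n + 1))"
    by (intro sum.cong) (simp_all add: L_RL2D_one_minus_eq algebra_simps)
  also have "\<dots> = label_mass x - (\<Sum>j\<in>{1..n}. gain x j * softmax n h x j)
      - gain x (n + 1) * softmax n h x (n + 1)"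
    by (simp add: sum_subtractf label_mass_def gain_def flip: sum_distrib_right)
  finally show ?thesis
    by (simp add: Ybar_eq_insert)
qed

lemma
  assumes "h \<in> H_all M n"
  shows integrable_cond_risk_L_def:
      "integrable marginal (\<lambda>x. label_mass x - gain x (hpred n h x))"
    and risk_L_def_eq:
      "risk D (L_def n c h) = (\<integral>x. label_mass x - gain x (hpred n h x) \<partial>marginal)"
proof -
  have meas: "(\<lambda>x. L_def n c h x y) \<in> borel_measurable M" if "y \<in> {1..n}" for y
  proof -
    have [measurable]: "Measurable.pred M (\<lambda>x. P (hpred n h x))" for P
      using measurable_compose[OF measurable_hpred[OF assms] measurable_count_space] .
    show ?thesis
      using c_meas[OF that] unfolding L_def_def by measurable
  qed
  have bound: "\<bar>L_def n c h x y\<bar> \<le> 1" if "x \<in> space M" "y \<in> {1..n}" for x y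
    using c_range[OF that] by (simp add: abs_L_def_le_one)
  show "integrable marginal (\<lambda>x. label_mass x - gain x (hpred n h x))"
    and "risk D (L_def n c h) = (\<integral>x. label_mass x - gain x (hpred n h x) \<partial>marginal)"
    using integrable_cond_expectation[where F = "L_def n c h", OF meas bound]
      integral_disintegrate[where F = "L_def n c h", OF meas bound]
    unfolding cond_risk_L_def by (simp_all add: risk_def)
qed

lemma
  assumes "h \<in> H_all M n"
  shows integrable_cond_risk_L_RL2D:
      "integrable marginal (\<lambda>x. label_mass x - (\<Sum>j\<in>Ybar n. gain x j * softmax n h x j))"
    and risk_L_RL2D_eq:
      "risk D (L_RL2D (\<lambda>t. 1 - t) n c h)
        = (\<integral>x. label_mass x - (\<Sum>j\<in>Ybar n. gain x j * softmax n h x j) \<partial>marginal)"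
proof -
  have meas: "(\<lambda>x. L_RL2D (\<lambda>t. 1 - t) n c h x y) \<in> borel_measurable M" if "y \<in> {1..n}" for y
  proof -
    have [measurable]: "(\<lambda>x. softmax n h x j) \<in> borel_measurable M" if "j \<in> Ybar n" for j
      using borel_measurable_softmax[OF assms that] .
    show ?thesis
      using c_meas[OF that] that unfolding L_RL2D_one_minus_eq[OF that] by (simp add: Ybar_def)
  qed
  have bound: "\<bar>L_RL2D (\<lambda>t. 1 - t) n c h x y\<bar> \<le> 1" if "x \<in> space M" "y \<in> {1..n}" for x y
    using c_range[OF that] that(2) by (simp add: abs_L_RL2D_one_minus_le_one)
  show "integrable marginal (\<lambda>x. label_mass x - (\<Sum>j\<in>Ybar n. gain x j * softmax n h x j))"
    and "risk D (L_RL2D (\<lambda>t. 1 - t) n c h)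
        = (\<integral>x. label_mass x - (\<Sum>j\<in>Ybar n. gain x j * softmax n h x j) \<partial>marginal)"
    using integrable_cond_expectation[where F = "L_RL2D (\<lambda>t. 1 - t) n c h", OF meas bound]
      integral_disintegrate[where F = "L_RL2D (\<lambda>t. 1 - t) n c h", OF meas bound]
    unfolding cond_risk_L_RL2D by (simp_all add: risk_def)
qed

lemma integrable_gain:
  assumes "j \<in> Ybar n"
  shows "integrable marginal (\<lambda>x. gain x j)"
proof -
  define F where "F x y = (if j \<le> n then of_bool (y = j) else 1 - c x y)" for x y
  have meas: "(\<lambda>x. F x y) \<in> borel_measurable M" if "y \<in> {1..n}" for y
    using c_meas[OF that] by (simp add: F_def)
  have bound: "\<bar>F x y\<bar> \<le> 1" if "x \<in> space M" "y \<in> {1..n}" for x y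
    using c_range[OF that] by (auto simp: F_def)
  have "(\<Sum>y\<in>{1..n}. cond_prob y x * F x y) = gain x j" for x
    using assms by (auto simp: F_def gain_def Ybar_def)
  then show ?thesis
    using integrable_cond_expectation[where F = F, OF meas bound] by simp
qed

lemma integrable_label_mass: "integrable marginal label_mass"
proof -
  have "label_mass = (\<lambda>x. \<Sum>j\<in>{1..n}. gain x j)"
    by (auto simp: label_mass_def gain_def)
  moreover have "integrable marginal (\<lambda>x. \<Sum>j\<in>{1..n}. gain x j)"
    by (intro Bochner_Integration.integrable_sum integrable_gain) (simp add: Ybar_def)
  ultimately show ?thesis
    by simp
qed

lemma integrable_max_gain: "integrable marginal max_gain"
proof -
  have "integrable marginal (\<lambda>x. label_mass x - (label_mass x - max_gain x))"
    using Bochner_Integration.integrable_diff[OF integrable_label_mass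
        integrable_cond_risk_L_def[OF gain_in_H_all]]
    by (simp add: max_gain_def)
  then show ?thesis
    by simp
qed

lemma integrable_bayes_cond_risk: "integrable marginal (\<lambda>x. label_mass x - max_gain x)"
  using integrable_label_mass integrable_max_gain by (rule Bochner_Integration.integrable_diff)

lemma bayes_risk_le_risk_L_def:
  assumes "h \<in> H_all M n"
  shows "bayes_risk \<le> risk D (L_def n c h)"
  unfolding risk_L_def_eq[OF assms] bayes_risk_def
  using integrable_bayes_cond_risk integrable_cond_risk_L_def[OF assms]
  by (rule integral_mono) (simp add: gain_le_max_gain hpred_in_Ybar)

lemma bayes_risk_le_risk_L_RL2D:
  assumes "h \<in> H_all M n"
  shows "bayes_risk \<le> risk D (L_RL2D (\<lambda>t. 1 - t) n c h)"
  unfolding risk_L_RL2D_eq[OF assms] bayes_risk_def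
  using integrable_bayes_cond_risk integrable_cond_risk_L_RL2D[OF assms]
  by (rule integral_mono) (simp add: gain_le_max_gain softmax_mean_le_max)

lemma best_risk_L_def: "best_risk D (H_all M n) (L_def n c) = bayes_risk"
proof (rule best_risk_eqI)
  have "risk D (L_def n c gain) = bayes_risk"
    by (simp add: risk_L_def_eq[OF gain_in_H_all] bayes_risk_def max_gain_def)
  then show "\<exists>h\<in>H_all M n. risk D (L_def n c h) \<le> bayes_risk + e" if "0 < e" for e
    using that gain_in_H_all by force
qed (rule bayes_risk_le_risk_L_def)

definition scaled_bayes_choice :: "real \<Rightarrow> 'a \<Rightarrow> nat \<Rightarrow> real" where
  "scaled_bayes_choice t x j = (if j = hpred n gain x then t else 0)"

lemma scaled_bayes_choice_in_H_all: "scaled_bayes_choice t \<in> H_all M n"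
  using measurable_hpred[OF gain_in_H_all] by (simp add: scaled_bayes_choice_def H_all_def)

lemma risk_L_RL2D_scaled_bayes_choice_le:
  "risk D (L_RL2D (\<lambda>t. 1 - t) n c (scaled_bayes_choice t))
    \<le> bayes_risk + exp (- t) * (\<integral>x. (\<Sum>j\<in>Ybar n. max_gain x - gain x j) \<partial>marginal)"
proof -
  let ?h = "scaled_bayes_choice t"
  have cond_le: "max_gain x - (\<Sum>j\<in>Ybar n. gain x j * softmax n ?h x j)
      \<le> exp (- t) * (\<Sum>j\<in>Ybar n. max_gain x - gain x j)" for x
  proof -
    have "softmax n ?h x j * (max_gain x - gain x j) \<le> exp (- t) * (max_gain x - gain x j)"
      if "j \<in> Ybar n" for j
    proof (cases "j = hpred n gain x")
      case False
      have "softmax n ?h x j \<le> exp (- t)"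
        using False softmax_le_exp_diff[where h = ?h and x = x and j = j,
            OF hpred_in_Ybar[of n gain x]]
        by (simp add: scaled_bayes_choice_def)
      then show ?thesis
        using gain_le_max_gain[OF that] by (intro mult_right_mono) auto
    qed (simp add: max_gain_def)
    then show ?thesis
      by (simp add: max_minus_weighted_sum[OF sum_softmax] sum_distrib_left sum_mono)
  qed
  have spread: "integrable marginal (\<lambda>x. \<Sum>j\<in>Ybar n. max_gain x - gain x j)"
    by (intro Bochner_Integration.integrable_sum Bochner_Integration.integrable_diff
        integrable_max_gain integrable_gain)
  have "risk D (L_RL2D (\<lambda>t. 1 - t) n c ?h)
      \<le> (\<integral>x. (label_mass x - max_gain x)
            + exp (- t) * (\<Sum>j\<in>Ybar n. max_gain x - gain x j) \<partial>marginal)"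
    unfolding risk_L_RL2D_eq[OF scaled_bayes_choice_in_H_all]
    using integrable_cond_risk_L_RL2D[OF scaled_bayes_choice_in_H_all] cond_le
    by (intro integral_mono Bochner_Integration.integrable_add integrable_bayes_cond_risk
        Bochner_Integration.integrable_mult_right spread) (auto simp: algebra_simps)
  also have "\<dots>
      = bayes_risk + exp (- t) * (\<integral>x. (\<Sum>j\<in>Ybar n. max_gain x - gain x j) \<partial>marginal)"
    using integrable_bayes_cond_risk spread by (simp add: bayes_risk_def)
  finally show ?thesis .
qed

lemma best_risk_L_RL2D: "best_risk D (H_all M n) (L_RL2D (\<lambda>t. 1 - t) n c) = bayes_risk"
proof (rule best_risk_eqI)
  fix e :: real assume "0 < e"
  define K where "K = (\<integral>x. (\<Sum>j\<in>Ybar n. max_gain x - gain x j) \<partial>marginal)"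
  have "0 \<le> K"
    unfolding K_def
    by (intro Bochner_Integration.integral_nonneg sum_nonneg) (simp add: gain_le_max_gain)
  define t where "t = - ln (e / (K + 1))"
  have "exp (- t) * (K + 1) = e"
    using \<open>0 < e\<close> \<open>0 \<le> K\<close> by (simp add: t_def)
  then have "exp (- t) * K \<le> e"
    by (simp add: distrib_left) (use exp_gt_zero[of "- t"] in linarith)
  then have "risk D (L_RL2D (\<lambda>t. 1 - t) n c (scaled_bayes_choice t)) \<le> bayes_risk + e"
    using risk_L_RL2D_scaled_bayes_choice_le[of t] unfolding K_def by linarith
  then show "\<exists>h\<in>H_all M n. risk D (L_RL2D (\<lambda>t. 1 - t) n c h) \<le> bayes_risk + e"
    using scaled_bayes_choice_in_H_all by blast
qed (rule bayes_risk_le_risk_L_RL2D)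

lemma excess_risk_L_def_le:
  assumes "h \<in> H_all M n"
  shows "risk D (L_def n c h) - bayes_risk
    \<le> real (n + 1) * (risk D (L_RL2D (\<lambda>t. 1 - t) n c h) - bayes_risk)"
proof -
  let ?mean = "\<lambda>x. \<Sum>j\<in>Ybar n. gain x j * softmax n h x j"
  have def_int: "integrable marginal (\<lambda>x. max_gain x - gain x (hpred n h x))"
    using Bochner_Integration.integrable_diff[OF integrable_cond_risk_L_def[OF assms]
        integrable_bayes_cond_risk] by simp
  have RL2D_int: "integrable marginal (\<lambda>x. max_gain x - ?mean x)"
    using Bochner_Integration.integrable_diff[OF integrable_cond_risk_L_RL2D[OF assms]
        integrable_bayes_cond_risk] by simp
  have "risk D (L_def n c h) - bayes_risk
      = (\<integral>x. max_gain x - gain x (hpred n h x) \<partial>marginal)"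
    unfolding risk_L_def_eq[OF assms] bayes_risk_def
    using integrable_cond_risk_L_def[OF assms] integrable_bayes_cond_risk
    by (simp flip: Bochner_Integration.integral_diff)
  also have "\<dots> \<le> (\<integral>x. real (n + 1) * (max_gain x - ?mean x) \<partial>marginal)"
    using def_int RL2D_int by (intro integral_mono gap_at_hpred_le gain_le_max_gain) auto
  also have "\<dots> = real (n + 1) * (risk D (L_RL2D (\<lambda>t. 1 - t) n c h) - bayes_risk)"
    unfolding risk_L_RL2D_eq[OF assms] bayes_risk_def
    using integrable_cond_risk_L_RL2D[OF assms] integrable_bayes_cond_risk
    by (simp flip: Bochner_Integration.integral_diff)
  finally show ?thesis .
qed

end

theorem corollary5:
  fixes M :: "'a measure" and D :: "('a \<times> nat) measure" and n :: nat
    and c :: "'a \<Rightarrow> nat \<Rightarrow> real"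
  assumes D: "prob_space D" "sets D = sets (M \<Otimes>\<^sub>M count_space {1..n})"
    and c_range: "\<And>x y. x \<in> space M \<Longrightarrow> y \<in> {1..n} \<Longrightarrow> 0 \<le> c x y \<and> c x y \<le> 1"
    and c_meas: "\<And>y. y \<in> {1..n} \<Longrightarrow> (\<lambda>x. c x y) \<in> borel_measurable M"
  shows "(\<forall>h\<in>H_all M n.
            risk D (L_def n c h) - best_risk D (H_all M n) (L_def n c)
            \<le> real (n + 1) * (risk D (L_RL2D (\<lambda>t. 1 - t) n c h)
                 - best_risk D (H_all M n) (L_RL2D (\<lambda>t. 1 - t) n c)))
       \<and> (\<forall>hk :: nat \<Rightarrow> 'a \<Rightarrow> nat \<Rightarrow> real. (\<forall>k. hk k \<in> H_all M n) \<longrightarrow>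
            (\<lambda>k. risk D (L_RL2D (\<lambda>t. 1 - t) n c (hk k))
                 - best_risk D (H_all M n) (L_RL2D (\<lambda>t. 1 - t) n c)) \<longlonglongrightarrow> 0 \<longrightarrow>
            (\<lambda>k. risk D (L_def n c (hk k))
                 - best_risk D (H_all M n) (L_def n c)) \<longlonglongrightarrow> 0)"
proof -
  interpret deferral_problem M D n c
    by (intro deferral_problem.intro finite_label_distribution.intro
        deferral_problem_axioms.intro D c_range c_meas finite_atLeastAtMost)
  have "(\<lambda>k. risk D (L_def n c (hk k)) - bayes_risk) \<longlonglongrightarrow> 0"
    if hk: "\<forall>k. hk k \<in> H_all M n"
      and lim: "(\<lambda>k. risk D (L_RL2D (\<lambda>t. 1 - t) n c (hk k)) - bayes_risk) \<longlonglongrightarrow> 0"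
    for hk :: "nat \<Rightarrow> 'a \<Rightarrow> nat \<Rightarrow> real"
  proof (rule tendsto_sandwich)
    show "\<forall>\<^sub>F k in sequentially. 0 \<le> risk D (L_def n c (hk k)) - bayes_risk"
      using hk bayes_risk_le_risk_L_def by simp
    show "\<forall>\<^sub>F k in sequentially. risk D (L_def n c (hk k)) - bayes_risk
        \<le> real (n + 1) * (risk D (L_RL2D (\<lambda>t. 1 - t) n c (hk k)) - bayes_risk)"
      using hk excess_risk_L_def_le by simp
    show "(\<lambda>k. real (n + 1) * (risk D (L_RL2D (\<lambda>t. 1 - t) n c (hk k)) - bayes_risk)) \<longlonglongrightarrow> 0"
      using tendsto_mult_right_zero[OF lim] by simp
  qed simp
  then show ?thesis
    using excess_risk_L_def_le by (simp add: best_risk_L_def best_risk_L_RL2D)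
qed

end
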